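(* Let $T\in\mathbb R^{m\times n}$ be injective and satisfy the positive cone condition, and $y\in\mathbb R^m$. Then for every $\lambda>0$, $$|x_\mu^i|\le|x_\lambda^i|\qquad\text{for all }i\in I(\lambda)\text{ and all }0<\mu\le\lambda.$$
   Context: For $\lambda>0$, $x_\lambda$ is the unique minimizer of $x\mapsto\frac{\lambda}{2}\|Tx-y\|_2^2+\|x\|_1$ on $\mathbb R^n$; $I(\lambda)=\{i:x_\lambda^i\ne0\}$. Positive cone condition: for every nonempty $J\subset\{1,\dots,n\}$, with $T^J$ the submatrix of columns indexed by $J$ and $S_J=((T^J)^TT^J)^{-1}$, one has $(S_J)_{i,i}-\sum_{j\ne i}|(S_J)_{i,j}|\ge0$ for all $i\in J$. *)

theory Defs
  imports "HOL-Analysis.Analysis"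
begin

definition lasso_obj :: "real^'n^'m \<Rightarrow> real^'m \<Rightarrow> real \<Rightarrow> real^'n \<Rightarrow> real" where
  "lasso_obj T y lam x = lam / 2 * (norm (T *v x - y))\<^sup>2 + (\<Sum>i\<in>UNIV. \<bar>x $ i\<bar>)"

definition lasso_sol :: "real^'n^'m \<Rightarrow> real^'m \<Rightarrow> real \<Rightarrow> real^'n" where
  "lasso_sol T y lam = (THE x. \<forall>z. lasso_obj T y lam x \<le> lasso_obj T y lam z)"

definition lasso_support :: "real^'n^'m \<Rightarrow> real^'m \<Rightarrow> real \<Rightarrow> 'n set" where
  "lasso_support T y lam = {i. lasso_sol T y lam $ i \<noteq> 0}"

definition gram :: "real^'n^'m \<Rightarrow> 'n \<Rightarrow> 'n \<Rightarrow> real" where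
  "gram T i j = column i T \<bullet> column j T"

text \<open>Positive cone condition: for every nonempty J, with S_J the inverse of
  (T^J)^T T^J (a J x J matrix), S_J is diagonally dominant with nonnegative margin.
  S_J is described as any J-indexed matrix inverting the Gram matrix on J
  (it is unique whenever it exists).\<close>
definition positive_cone_condition :: "real^'n^'m \<Rightarrow> bool" where
  "positive_cone_condition T \<longleftrightarrow>
     (\<forall>J::'n set. J \<noteq> {} \<longrightarrow>
        (\<forall>S::'n \<Rightarrow> 'n \<Rightarrow> real.
           (\<forall>i\<in>J. \<forall>j\<in>J. (\<Sum>k\<in>J. gram T i k * S k j) = (if i = j then 1 else 0))
           \<longrightarrow> (\<forall>i\<in>J. S i i - (\<Sum>j\<in>J - {i}. \<bar>S i j\<bar>) \<ge> 0)))"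

end

theory Submission
  imports Defs
begin

text \<open>Parametrise by \<open>r = 1/\<lambda>\<close>. A sign pattern \<open>(J, P)\<close> (support \<open>J\<close>, positive part \<open>P\<close>,
  signs \<open>\<sigma>\<close>) determines the affine path \<open>z(r) = z\<^sub>0 - r d\<close> with \<open>d = S\<^sub>J \<sigma>\<close>, and on the closed
  set of \<open>r\<close> where \<open>z(r)\<close> satisfies the KKT conditions with that pattern, \<open>z(r)\<close> is the lasso
  solution. The positive cone condition gives \<open>\<sigma>\<^sub>i d\<^sub>i \<ge> (S\<^sub>J)\<^sub>i\<^sub>i - (\<Sum>j \<noteq> i. \<bar>(S\<^sub>J)\<^sub>i\<^sub>j\<bar>) \<ge> 0\<close>,
  so every \<open>\<bar>z\<^sub>i(r)\<bar>\<close> is non-increasing on such a set. Finitely many of these closed sets cover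
  \<open>[1/\<lambda>, 1/\<mu>]\<close>, and a function that is antitone on each member of a finite closed cover of an
  interval is antitone on the whole interval.\<close>

lemma inner_matrix_vector_mult:
  "u \<bullet> (T *v v) = (\<Sum>j\<in>UNIV. v$j * (column j T \<bullet> u))"
  by (simp add: matrix_mult_sum inner_sum_right inner_commute scalar_mult_eq_scaleR)

lemma column_inner_matrix_vector_mult:
  "column j T \<bullet> (T *v w) = (\<Sum>k\<in>UNIV. gram T j k * w$k)"
  by (simp add: inner_matrix_vector_mult gram_def inner_commute mult.commute)

lemma sum_gram_supported:
  assumes "\<And>k. k \<notin> J \<Longrightarrow> w$k = 0"
  shows "(\<Sum>k\<in>J. gram T j k * w$k) = column j T \<bullet> (T *v w)"
proof -
  have "(\<Sum>k\<in>J. gram T j k * w$k) = (\<Sum>k\<in>UNIV. gram T j k * w$k)"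
    by (rule sum.mono_neutral_left) (use assms in auto)
  thus ?thesis by (simp add: column_inner_matrix_vector_mult)
qed

lemma gram_block_kernel:
  fixes T :: "real^'n^'m"
  assumes inj: "inj ((*v) T)" and supp: "\<And>k. k \<notin> J \<Longrightarrow> w$k = 0"
    and ker: "\<And>j. j \<in> J \<Longrightarrow> (\<Sum>k\<in>J. gram T j k * w$k) = 0"
  shows "w = 0"
proof -
  have "\<And>j. j \<in> J \<Longrightarrow> column j T \<bullet> (T *v w) = 0"
    using ker by (simp add: sum_gram_supported[OF supp, symmetric])
  hence "(T *v w) \<bullet> (T *v w) = 0"
    unfolding inner_matrix_vector_mult[of "T *v w" T w] by (intro sum.neutral) (metis mult_eq_0_iff supp)
  hence "T *v w = T *v 0" by simp
  thus ?thesis using inj by (metis injD)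
qed

lemma le_zero_if_le_small_multiples:
  fixes a K :: real
  assumes "\<And>e. 0 < e \<Longrightarrow> e \<le> 1 \<Longrightarrow> a \<le> e * K"
  shows "a \<le> 0"
proof -
  have "((\<lambda>e. e * K) \<longlongrightarrow> 0 * K) (at_right 0)" by (intro tendsto_intros)
  moreover have "eventually (\<lambda>e. a \<le> e * K) (at_right (0::real))"
    unfolding eventually_at_right_field using assms by (intro exI[of _ 1]) auto
  ultimately show ?thesis by (simp add: tendsto_lowerbound)
qed

subsection \<open>Optimality conditions\<close>

definition residual_corr :: "real^'n^'m \<Rightarrow> real^'m \<Rightarrow> real^'n \<Rightarrow> 'n \<Rightarrow> real" where
  "residual_corr T y x j = column j T \<bullet> (y - T *v x)"

definition lasso_minimizer :: "real^'n^'m \<Rightarrow> real^'m \<Rightarrow> real \<Rightarrow> real^'n \<Rightarrow> bool" where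
  "lasso_minimizer T y lam x \<longleftrightarrow> (\<forall>z. lasso_obj T y lam x \<le> lasso_obj T y lam z)"

definition lasso_kkt :: "real^'n^'m \<Rightarrow> real^'m \<Rightarrow> real \<Rightarrow> real^'n \<Rightarrow> bool" where
  "lasso_kkt T y lam x \<longleftrightarrow>
     (\<forall>j. \<bar>lam * residual_corr T y x j\<bar> \<le> 1 \<and> lam * residual_corr T y x j * x$j = \<bar>x$j\<bar>)"

lemma lasso_obj_add_axis:
  fixes T :: "real^'n^'m"
  shows "lasso_obj T y lam (x + axis j h) = lasso_obj T y lam x
     + lam * (- h * residual_corr T y x j + h^2 / 2 * (norm (column j T))^2) + \<bar>x$j + h\<bar> - \<bar>x$j\<bar>"
proof -
  have "\<And>i. (axis j h $ i) *s column i T = (if i = j then h *\<^sub>R column j T else 0)"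
    by (simp add: axis_def scalar_mult_eq_scaleR)
  hence T_axis: "T *v axis j h = h *\<^sub>R column j T"
    unfolding matrix_mult_sum by simp
  have norm_part: "(norm (T *v (x + axis j h) - y))^2 = (norm (T *v x - y))^2
       - 2 * h * residual_corr T y x j + h^2 * (norm (column j T))^2"
    unfolding matrix_vector_right_distrib T_axis power2_norm_eq_inner residual_corr_def
    by (simp add: algebra_simps inner_commute power2_eq_square)
  have "(\<Sum>i\<in>UNIV. \<bar>(x + axis j h) $ i\<bar>)
      = (\<Sum>i\<in>UNIV. \<bar>x $ i\<bar> + (if i = j then \<bar>x$j + h\<bar> - \<bar>x$j\<bar> else 0))"
    by (rule sum.cong) (auto simp: axis_def)
  hence l1_part: "(\<Sum>i\<in>UNIV. \<bar>(x + axis j h) $ i\<bar>) = (\<Sum>i\<in>UNIV. \<bar>x $ i\<bar>) + (\<bar>x$j + h\<bar> - \<bar>x$j\<bar>)"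
    by (simp add: sum.distrib)
  show ?thesis
    unfolding lasso_obj_def norm_part l1_part by (simp add: algebra_simps)
qed

lemma lasso_minimizer_axis_ineq:
  assumes "lasso_minimizer T y lam x"
  shows "0 \<le> lam * (- h * residual_corr T y x j + h^2 / 2 * (norm (column j T))^2)
              + \<bar>x$j + h\<bar> - \<bar>x$j\<bar>"
proof -
  have "lasso_obj T y lam x \<le> lasso_obj T y lam (x + axis j h)"
    using assms by (simp add: lasso_minimizer_def)
  thus ?thesis using lasso_obj_add_axis[of T y lam x j h] by linarith
qed

lemma lasso_minimizer_corr_bound:
  assumes min: "lasso_minimizer T y lam x" and lam: "lam > 0"
  shows "\<bar>lam * residual_corr T y x j\<bar> \<le> 1"
proof -
  define c where "c = residual_corr T y x j"
  define g where "g = (norm (column j T))^2"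
  have "\<bar>lam * c\<bar> - 1 \<le> 0"
  proof (rule le_zero_if_le_small_multiples)
    fix e :: real assume e: "0 < e" "e \<le> 1"
    define h where "h = e * sgn c"
    have "0 \<le> lam * (- h * c + h^2 / 2 * g) + \<bar>x$j + h\<bar> - \<bar>x$j\<bar>"
      using lasso_minimizer_axis_ineq[OF min] unfolding c_def g_def .
    moreover have "lam * (- h * c + h^2 / 2 * g) = - (lam * (h * c)) + lam * (h^2 / 2 * g)"
      by (simp add: algebra_simps)
    moreover have "\<bar>x$j + h\<bar> - \<bar>x$j\<bar> \<le> e" using e by (simp add: h_def abs_mult sgn_if) linarith
    moreover have "lam * (h * c) = e * \<bar>lam * c\<bar>" using lam by (auto simp: h_def sgn_if abs_mult)
    moreover have "lam * (h^2 / 2 * g) \<le> e * (e * (lam * g / 2))"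
      using e lam by (auto simp: h_def power_mult_distrib sgn_if g_def power2_eq_square)
    moreover have "e * (1 - \<bar>lam * c\<bar> + e * (lam * g / 2))
        = e - e * \<bar>lam * c\<bar> + e * (e * (lam * g / 2))" by (simp add: algebra_simps)
    ultimately have "0 \<le> e * (1 - \<bar>lam * c\<bar> + e * (lam * g / 2))" by linarith
    thus "\<bar>lam * c\<bar> - 1 \<le> e * (lam * g / 2)" using e by (simp add: zero_le_mult_iff)
  qed
  thus ?thesis by (simp add: c_def)
qed

lemma lasso_minimizer_corr_sign:
  assumes min: "lasso_minimizer T y lam x" and lam: "lam > 0"
  shows "\<bar>x$j\<bar> \<le> lam * residual_corr T y x j * x$j"
proof -
  define c where "c = residual_corr T y x j"
  define g where "g = (norm (column j T))^2"
  have "\<bar>x$j\<bar> - lam * c * x$j \<le> 0"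
  proof (rule le_zero_if_le_small_multiples)
    fix e :: real assume e: "0 < e" "e \<le> 1"
    define h where "h = - e * x$j"
    have "0 \<le> lam * (- h * c + h^2 / 2 * g) + \<bar>x$j + h\<bar> - \<bar>x$j\<bar>"
      using lasso_minimizer_axis_ineq[OF min] unfolding c_def g_def .
    moreover have "x$j + h = (1 - e) * x$j" by (simp add: h_def algebra_simps)
    hence "\<bar>x$j + h\<bar> = (1 - e) * \<bar>x$j\<bar>" using e by (simp add: abs_mult)
    ultimately have "0 \<le> e * (lam * c * x$j - \<bar>x$j\<bar> + e * (lam * g / 2 * (x$j)^2))"
      by (simp add: h_def algebra_simps power2_eq_square)
    thus "\<bar>x$j\<bar> - lam * c * x$j \<le> e * (lam * g / 2 * (x$j)^2)"
      using e by (simp add: zero_le_mult_iff)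
  qed
  thus ?thesis by (simp add: c_def)
qed

lemma lasso_kkt_if_minimizer:
  assumes "lasso_minimizer T y lam x" and "lam > 0"
  shows "lasso_kkt T y lam x"
  unfolding lasso_kkt_def
proof
  fix j
  define c where "c = lam * residual_corr T y x j"
  have bound: "\<bar>c\<bar> \<le> 1" using lasso_minimizer_corr_bound[OF assms] by (simp add: c_def)
  have "c * x$j \<le> \<bar>c\<bar> * \<bar>x$j\<bar>" by (metis abs_ge_self abs_mult)
  also have "\<dots> \<le> \<bar>x$j\<bar>" using bound by (simp add: mult_left_le_one_le)
  finally show "\<bar>c\<bar> \<le> 1 \<and> c * x$j = \<bar>x$j\<bar>"
    using bound lasso_minimizer_corr_sign[OF assms, of j] by (simp add: c_def)
qed

lemma lasso_minimizer_if_kkt: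
  fixes T :: "real^'n^'m"
  assumes lam: "lam > 0" and kkt: "lasso_kkt T y lam x"
  shows "lasso_minimizer T y lam x"
  unfolding lasso_minimizer_def
proof
  fix w
  define c where "c = residual_corr T y x"
  define a where "a = T *v x - y"
  define v where "v = T *v (w - x)"
  have kkt_j: "\<bar>lam * c j\<bar> \<le> 1" "lam * c j * x$j = \<bar>x$j\<bar>" for j
    using kkt by (auto simp: lasso_kkt_def c_def)
  have "T *v w - y = a + v" by (simp add: a_def v_def matrix_vector_mult_diff_distrib)
  hence quadratic: "(norm a)^2 + 2 * (a \<bullet> v) \<le> (norm (T *v w - y))^2"
    unfolding power2_norm_eq_inner by (simp add: inner_add algebra_simps inner_commute)
  have cross_term: "a \<bullet> v = (\<Sum>j\<in>UNIV. (w$j - x$j) * (- c j))"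
    unfolding a_def v_def c_def residual_corr_def inner_matrix_vector_mult
    by (simp add: inner_diff_right)
  have "lam * (a \<bullet> v) + (\<Sum>j\<in>UNIV. \<bar>w$j\<bar>) - (\<Sum>j\<in>UNIV. \<bar>x$j\<bar>)
      = (\<Sum>j\<in>UNIV. (\<bar>w$j\<bar> - lam * c j * w$j) + (lam * c j * x$j - \<bar>x$j\<bar>))"
    unfolding cross_term by (simp add: sum_distrib_left sum.distrib sum_subtractf algebra_simps)
  also have "\<dots> = (\<Sum>j\<in>UNIV. \<bar>w$j\<bar> - lam * c j * w$j)"
    using kkt_j by simp
  also have "\<dots> \<ge> 0"
  proof (intro sum_nonneg)
    fix j
    have "lam * c j * w$j \<le> \<bar>lam * c j\<bar> * \<bar>w$j\<bar>" by (metis abs_ge_self abs_mult)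
    also have "\<dots> \<le> \<bar>w$j\<bar>" using kkt_j by (simp add: mult_left_le_one_le)
    finally show "0 \<le> \<bar>w$j\<bar> - lam * c j * w$j" by simp
  qed
  finally have linear: "0 \<le> lam * (a \<bullet> v) + (\<Sum>j\<in>UNIV. \<bar>w$j\<bar>) - (\<Sum>j\<in>UNIV. \<bar>x$j\<bar>)" .
  have "lam / 2 * ((norm a)^2 + 2 * (a \<bullet> v)) \<le> lam / 2 * (norm (T *v w - y))^2"
    using quadratic lam by (intro mult_left_mono) auto
  thus "lasso_obj T y lam x \<le> lasso_obj T y lam w"
    using linear unfolding lasso_obj_def a_def[symmetric] by (simp add: algebra_simps)
qed

subsection \<open>Existence and uniqueness of the lasso solution\<close>

lemma lasso_minimizer_exists:
  fixes T :: "real^'n^'m"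
  assumes lam: "lam > 0"
  shows "\<exists>x. lasso_minimizer T y lam x"
proof -
  define f where "f = lasso_obj T y lam"
  define S where "S = {x. f x \<le> f 0}"
  have cont: "continuous_on UNIV f" unfolding f_def lasso_obj_def by (intro continuous_intros)
  have "closed S" unfolding S_def by (intro closed_Collect_le cont continuous_on_const)
  moreover have "S \<subseteq> cball 0 (f 0)"
  proof
    fix x assume "x \<in> S"
    moreover have "norm x \<le> f x"
      using norm_le_l1_cart[of x] lam unfolding f_def lasso_obj_def
      by (smt (verit) zero_le_power2 mult_nonneg_nonneg divide_nonneg_pos)
    ultimately show "x \<in> cball 0 (f 0)" by (simp add: S_def)
  qed
  ultimately have "compact S" by (meson bounded_cball bounded_subset compact_eq_bounded_closed)
  moreover have "S \<noteq> {}" by (auto simp: S_def)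
  ultimately obtain x where "x \<in> S" "\<forall>z\<in>S. f x \<le> f z"
    using continuous_attains_inf continuous_on_subset[OF cont] by blast
  hence "\<forall>z. f x \<le> f z" by (metis S_def mem_Collect_eq order_trans nle_le)
  thus ?thesis unfolding f_def lasso_minimizer_def by blast
qed

text \<open>The residual is strictly convex in \<open>T x\<close>: at the midpoint of two minimizers the objective
  drops by \<open>\<lambda>/8 \<parallel>T x - T x'\<parallel>\<^sup>2\<close>, which forces \<open>T x = T x'\<close>.\<close>
lemma lasso_minimizer_unique:
  fixes T :: "real^'n^'m"
  assumes inj: "inj ((*v) T)" and lam: "lam > 0"
    and min: "lasso_minimizer T y lam x" and min': "lasso_minimizer T y lam x'"
  shows "x = x'"
proof -
  define a where "a = T *v x - y"
  define b where "b = T *v x' - y"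
  define m where "m = (1/2) *\<^sub>R (x + x')"
  have Tm: "T *v m - y = (1/2) *\<^sub>R (a + b)"
    unfolding m_def a_def b_def matrix_vector_mult_scaleR matrix_vector_right_distrib
    by (simp add: vec_eq_iff field_simps)
  have parallelogram: "(norm ((1/2) *\<^sub>R (a + b)))^2
      = ((norm a)^2 + (norm b)^2) / 2 - (norm (a - b))^2 / 4"
    unfolding power2_norm_eq_inner
    by (simp add: inner_add inner_diff algebra_simps inner_commute) (simp add: field_simps)
  have "(\<Sum>i\<in>UNIV. \<bar>m$i\<bar>) \<le> (\<Sum>i\<in>UNIV. (\<bar>x$i\<bar> + \<bar>x'$i\<bar>) / 2)"
    by (intro sum_mono) (simp add: m_def abs_triangle_ineq)
  also have "\<dots> = ((\<Sum>i\<in>UNIV. \<bar>x$i\<bar>) + (\<Sum>i\<in>UNIV. \<bar>x'$i\<bar>)) / 2"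
    by (simp add: sum.distrib flip: sum_divide_distrib)
  finally have "lasso_obj T y lam m
      \<le> (lasso_obj T y lam x + lasso_obj T y lam x') / 2 - lam / 8 * (norm (a - b))^2"
    unfolding lasso_obj_def Tm parallelogram a_def[symmetric] b_def[symmetric]
    by (simp add: field_simps)
  moreover have "lasso_obj T y lam x = lasso_obj T y lam x'" "lasso_obj T y lam x \<le> lasso_obj T y lam m"
    using min min' by (auto simp: lasso_minimizer_def intro: order_antisym)
  ultimately have "lam * (norm (a - b))^2 \<le> 0" by simp
  hence "a = b" using lam by (simp add: mult_le_0_iff)
  hence "T *v x = T *v x'" by (simp add: a_def b_def)
  thus ?thesis using inj by (simp add: inj_eq)
qed

lemma lasso_sol_eq_iff_kkt:
  fixes T :: "real^'n^'m"
  assumes inj: "inj ((*v) T)" and lam: "lam > 0"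
  shows "lasso_sol T y lam = x \<longleftrightarrow> lasso_kkt T y lam x"
proof -
  have "\<exists>!x. lasso_minimizer T y lam x"
    using lasso_minimizer_exists[OF lam] lasso_minimizer_unique[OF inj lam] by blast
  hence "lasso_sol T y lam = x \<longleftrightarrow> lasso_minimizer T y lam x"
    unfolding lasso_sol_def lasso_minimizer_def[symmetric] by (metis the1_equality theI')
  thus ?thesis using lasso_kkt_if_minimizer lasso_minimizer_if_kkt lam by blast
qed

subsection \<open>Inverting the Gram matrix on a block\<close>

text \<open>Acts as the Gram block \<open>(T\<^sup>J)\<^sup>T T\<^sup>J\<close> on the coordinates in \<open>J\<close> and as the identity
  elsewhere, so that it is invertible and the \<open>J\<close>-block of its inverse is \<open>S\<^sub>J\<close>.\<close>
definition gram_block_op :: "real^'n^'m \<Rightarrow> 'n set \<Rightarrow> real^'n \<Rightarrow> real^'n" where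
  "gram_block_op T J u = (\<chi> j. if j \<in> J then (\<Sum>k\<in>J. gram T j k * u$k) else u$j)"

definition gram_block_solve :: "real^'n^'m \<Rightarrow> 'n set \<Rightarrow> real^'n \<Rightarrow> real^'n" where
  "gram_block_solve T J = inv (gram_block_op T J)"

definition gram_block_inverse :: "real^'n^'m \<Rightarrow> 'n set \<Rightarrow> 'n \<Rightarrow> 'n \<Rightarrow> real" where
  "gram_block_inverse T J k j = gram_block_solve T J (axis j 1) $ k"

lemma linear_gram_block_op: "linear (gram_block_op T J)"
  by (rule linearI) (simp_all add: gram_block_op_def vec_eq_iff sum.distrib algebra_simps sum_distrib_left)

lemma surj_gram_block_op:
  fixes T :: "real^'n^'m"
  assumes inj: "inj ((*v) T)"
  shows "surj (gram_block_op T J)"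
proof -
  have "inj (gram_block_op T J)"
    unfolding linear_injective_0[OF linear_gram_block_op]
  proof (intro allI impI)
    fix u assume "gram_block_op T J u = 0"
    hence component: "\<And>j. gram_block_op T J u $ j = 0" by simp
    show "u = 0"
    proof (rule gram_block_kernel[OF inj, of J])
      show "u$k = 0" if "k \<notin> J" for k
        using component[of k] that by (simp add: gram_block_op_def)
      show "(\<Sum>k\<in>J. gram T j k * u$k) = 0" if "j \<in> J" for j
        using component[of j] that by (simp add: gram_block_op_def)
    qed
  qed
  thus ?thesis by (intro linear_injective_imp_surjective linear_gram_block_op) auto
qed

lemma gram_block_solve:
  fixes T :: "real^'n^'m"
  assumes inj: "inj ((*v) T)"
  shows "j \<in> J \<Longrightarrow> (\<Sum>k\<in>J. gram T j k * gram_block_solve T J b $ k) = b$j"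
    and "j \<notin> J \<Longrightarrow> gram_block_solve T J b $ j = b$j"
proof -
  have "gram_block_op T J (gram_block_solve T J b) $ j = b$j"
    unfolding gram_block_solve_def using surj_gram_block_op[OF inj] by (simp add: surj_f_inv_f)
  thus "j \<in> J \<Longrightarrow> (\<Sum>k\<in>J. gram T j k * gram_block_solve T J b $ k) = b$j"
    and "j \<notin> J \<Longrightarrow> gram_block_solve T J b $ j = b$j"
    by (simp_all add: gram_block_op_def)
qed

lemma gram_block_inverse_right:
  fixes T :: "real^'n^'m"
  assumes inj: "inj ((*v) T)"
  shows "\<forall>i\<in>J. \<forall>j\<in>J. (\<Sum>k\<in>J. gram T i k * gram_block_inverse T J k j) = (if i = j then 1 else 0)"
  using gram_block_solve(1)[OF inj] unfolding gram_block_inverse_def by (simp add: axis_def)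

subsection \<open>The solution path along a fixed sign pattern\<close>

definition pattern_sign :: "'n set \<Rightarrow> 'n \<Rightarrow> real" where
  "pattern_sign P j = (if j \<in> P then 1 else -1)"

definition cone_direction :: "real^'n^'m \<Rightarrow> 'n set \<Rightarrow> 'n set \<Rightarrow> real^'n" where
  "cone_direction T J P =
     (\<chi> j. if j \<in> J then (\<Sum>k\<in>J. gram_block_inverse T J j k * pattern_sign P k) else 0)"

lemma gram_cone_direction:
  fixes T :: "real^'n^'m"
  assumes inj: "inj ((*v) T)" and i: "i \<in> J"
  shows "(\<Sum>j\<in>J. gram T i j * cone_direction T J P $ j) = pattern_sign P i"
proof -
  have "(\<Sum>j\<in>J. gram T i j * cone_direction T J P $ j)
      = (\<Sum>j\<in>J. \<Sum>k\<in>J. gram T i j * gram_block_inverse T J j k * pattern_sign P k)"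
    by (rule sum.cong) (auto simp: cone_direction_def sum_distrib_left mult.assoc)
  also have "\<dots> = (\<Sum>k\<in>J. (\<Sum>j\<in>J. gram T i j * gram_block_inverse T J j k) * pattern_sign P k)"
    by (subst sum.swap) (simp add: sum_distrib_right)
  also have "\<dots> = (\<Sum>k\<in>J. if i = k then pattern_sign P k else 0)"
    using gram_block_inverse_right[OF inj] i by (intro sum.cong) auto
  also have "\<dots> = pattern_sign P i" using i by simp
  finally show ?thesis .
qed

lemma positive_cone_condition_sign:
  fixes T :: "real^'n^'m"
  assumes inj: "inj ((*v) T)" and cone: "positive_cone_condition T" and i: "i \<in> J"
  shows "0 \<le> pattern_sign P i * cone_direction T J P $ i"
proof -
  let ?S = "gram_block_inverse T J"
  have dominant: "0 \<le> ?S i i - (\<Sum>k\<in>J - {i}. \<bar>?S i k\<bar>)"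
    using cone gram_block_inverse_right[OF inj, of J] i unfolding positive_cone_condition_def by blast
  have "pattern_sign P i * cone_direction T J P $ i
      = (\<Sum>k\<in>J. ?S i k * (pattern_sign P i * pattern_sign P k))"
    using i by (simp add: cone_direction_def sum_distrib_left algebra_simps)
  also have "\<dots> = ?S i i + (\<Sum>k\<in>J - {i}. ?S i k * (pattern_sign P i * pattern_sign P k))"
    using i by (simp add: sum.remove pattern_sign_def)
  also have "\<dots> \<ge> ?S i i + (\<Sum>k\<in>J - {i}. - \<bar>?S i k\<bar>)"
    by (intro add_left_mono sum_mono) (auto simp: pattern_sign_def)
  finally show ?thesis using dominant by (simp add: sum_negf)
qed

definition lasso_path :: "real^'n^'m \<Rightarrow> real^'m \<Rightarrow> 'n set \<Rightarrow> 'n set \<Rightarrow> real \<Rightarrow> real^'n" where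
  "lasso_path T y J P r =
     gram_block_solve T J (\<chi> j. if j \<in> J then column j T \<bullet> y else 0) - r *\<^sub>R cone_direction T J P"

lemma lasso_path_outside:
  fixes T :: "real^'n^'m"
  assumes inj: "inj ((*v) T)" and "j \<notin> J"
  shows "lasso_path T y J P r $ j = 0"
  using gram_block_solve(2)[OF inj] assms(2) by (simp add: lasso_path_def cone_direction_def)

lemma residual_corr_lasso_path:
  fixes T :: "real^'n^'m"
  assumes inj: "inj ((*v) T)" and j: "j \<in> J"
  shows "residual_corr T y (lasso_path T y J P r) j = r * pattern_sign P j"
proof -
  have "column j T \<bullet> (T *v lasso_path T y J P r) = (\<Sum>k\<in>J. gram T j k * lasso_path T y J P r $ k)"
    using sum_gram_supported[of J "lasso_path T y J P r" T j] lasso_path_outside[OF inj] by simp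
  also have "\<dots> = column j T \<bullet> y - r * pattern_sign P j"
    using j gram_block_solve(1)[OF inj j] gram_cone_direction[OF inj j]
    by (simp add: lasso_path_def algebra_simps sum_subtractf flip: sum_distrib_left)
  finally show ?thesis by (simp add: residual_corr_def inner_diff_right)
qed

text \<open>Sign consistency on \<open>J\<close> is required only weakly, which keeps the set closed.\<close>
definition lasso_piece :: "real^'n^'m \<Rightarrow> real^'m \<Rightarrow> 'n set \<Rightarrow> 'n set \<Rightarrow> real set" where
  "lasso_piece T y J P = {r. (\<forall>j\<in>J. 0 \<le> pattern_sign P j * lasso_path T y J P r $ j)
      \<and> (\<forall>j. j \<notin> J \<longrightarrow> \<bar>residual_corr T y (lasso_path T y J P r) j\<bar> \<le> r)}"

lemma closed_lasso_piece: "closed (lasso_piece T y J P)"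
proof -
  have "lasso_piece T y J P = (\<Inter>j\<in>J. {r. 0 \<le> pattern_sign P j * lasso_path T y J P r $ j})
      \<inter> (\<Inter>j\<in>-J. {r. \<bar>residual_corr T y (lasso_path T y J P r) j\<bar> \<le> r})"
    by (auto simp: lasso_piece_def)
  moreover have "continuous_on UNIV (\<lambda>r. pattern_sign P j * lasso_path T y J P r $ j)" for j
    unfolding lasso_path_def by (intro continuous_intros)
  moreover have "continuous_on UNIV (\<lambda>r. \<bar>residual_corr T y (lasso_path T y J P r) j\<bar>)" for j
    unfolding lasso_path_def residual_corr_def
    by (simp add: matrix_vector_mult_diff_distrib matrix_vector_mult_scaleR) (intro continuous_intros)
  ultimately show ?thesis
    by (simp add: closed_Int closed_INT closed_Collect_le continuous_on_id)
qed

lemma lasso_sol_on_piece: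
  fixes T :: "real^'n^'m"
  assumes inj: "inj ((*v) T)" and r: "r > 0" "r \<in> lasso_piece T y J P"
  shows "lasso_sol T y (1/r) = lasso_path T y J P r"
proof -
  let ?z = "lasso_path T y J P r"
  have "\<bar>1/r * residual_corr T y ?z j\<bar> \<le> 1 \<and> 1/r * residual_corr T y ?z j * ?z$j = \<bar>?z$j\<bar>" for j
  proof (cases "j \<in> J")
    case True
    hence "0 \<le> pattern_sign P j * ?z$j" using r by (simp add: lasso_piece_def)
    thus ?thesis
      using residual_corr_lasso_path[OF inj True] r by (auto simp: pattern_sign_def)
  next
    case False
    thus ?thesis using lasso_path_outside[OF inj False] r by (simp add: lasso_piece_def abs_mult)
  qed
  thus ?thesis using lasso_sol_eq_iff_kkt[OF inj] r by (simp add: lasso_kkt_def)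
qed

lemma abs_lasso_path_antitone_on_piece:
  fixes T :: "real^'n^'m"
  assumes inj: "inj ((*v) T)" and cone: "positive_cone_condition T"
    and r: "r \<in> lasso_piece T y J P" "r' \<in> lasso_piece T y J P" "r \<le> r'"
  shows "\<bar>lasso_path T y J P r' $ i\<bar> \<le> \<bar>lasso_path T y J P r $ i\<bar>"
proof (cases "i \<in> J")
  case True
  let ?\<sigma> = "pattern_sign P i"
  have abs_eq: "\<bar>lasso_path T y J P s $ i\<bar> = ?\<sigma> * lasso_path T y J P s $ i"
    if "s \<in> lasso_piece T y J P" for s
    using that True by (auto simp: lasso_piece_def pattern_sign_def)
  have "?\<sigma> * lasso_path T y J P r' $ i \<le> ?\<sigma> * lasso_path T y J P r $ i"
    using positive_cone_condition_sign[OF inj cone True, of P] r(3)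
    by (simp add: lasso_path_def algebra_simps mult_right_mono)
  thus ?thesis using abs_eq r by simp
qed (simp add: lasso_path_outside[OF inj])

lemma abs_lasso_sol_antitone_on_piece:
  fixes T :: "real^'n^'m"
  assumes inj: "inj ((*v) T)" and cone: "positive_cone_condition T" and t: "t > 0"
  shows "antimono_on (lasso_piece T y J P \<inter> {t..}) (\<lambda>r. \<bar>lasso_sol T y (1/r) $ i\<bar>)"
proof (rule monotone_onI)
  fix r r' assume r: "r \<in> lasso_piece T y J P \<inter> {t..}" "r' \<in> lasso_piece T y J P \<inter> {t..}" "r \<le> r'"
  hence "lasso_sol T y (1/r) = lasso_path T y J P r" "lasso_sol T y (1/r') = lasso_path T y J P r'"
    using t by (auto intro!: lasso_sol_on_piece[OF inj])
  thus "\<bar>lasso_sol T y (1/r') $ i\<bar> \<le> \<bar>lasso_sol T y (1/r) $ i\<bar>"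
    using r abs_lasso_path_antitone_on_piece[OF inj cone] by simp
qed

lemma lasso_piece_of_sol:
  fixes T :: "real^'n^'m" and y :: "real^'m"
  assumes inj: "inj ((*v) T)" and r: "r > 0"
  defines "x \<equiv> lasso_sol T y (1/r)"
  shows "r \<in> lasso_piece T y {j. x$j \<noteq> 0} {j. x$j > 0}"
proof -
  define J where "J = {j. x$j \<noteq> 0}"
  define P where "P = {j. x$j > 0}"
  let ?z = "lasso_path T y J P r"
  have kkt: "\<bar>residual_corr T y x j\<bar> \<le> r" "residual_corr T y x j * x$j = r * \<bar>x$j\<bar>" for j
    using lasso_sol_eq_iff_kkt[OF inj, of "1/r" y x] r
    by (auto simp: x_def lasso_kkt_def abs_mult field_simps)
  have corr_J: "residual_corr T y x j = r * pattern_sign P j" if "j \<in> J" for j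
  proof -
    have "residual_corr T y x j * x$j = (r * pattern_sign P j) * x$j"
      using kkt(2)[of j] by (auto simp: P_def pattern_sign_def abs_if)
    thus ?thesis using that by (simp add: J_def)
  qed
  have x_outside: "\<And>k. k \<notin> J \<Longrightarrow> x$k = 0" by (simp add: J_def)
  have "x - ?z = 0"
  proof (rule gram_block_kernel[OF inj])
    show "\<And>k. k \<notin> J \<Longrightarrow> (x - ?z)$k = 0" using x_outside lasso_path_outside[OF inj] by simp
  next
    fix j assume j: "j \<in> J"
    have "(\<Sum>k\<in>J. gram T j k * (x - ?z)$k)
        = column j T \<bullet> (T *v x) - column j T \<bullet> (T *v ?z)"
      using sum_gram_supported[of J x T j] sum_gram_supported[of J ?z T j]
        x_outside lasso_path_outside[OF inj] by (simp add: algebra_simps sum_subtractf)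
    also have "\<dots> = residual_corr T y ?z j - residual_corr T y x j"
      by (simp add: residual_corr_def inner_diff_right)
    finally show "(\<Sum>k\<in>J. gram T j k * (x - ?z)$k) = 0"
      using corr_J[OF j] residual_corr_lasso_path[OF inj j] by simp
  qed
  hence "x = ?z" by simp
  hence "\<forall>j\<in>J. 0 \<le> pattern_sign P j * ?z $ j" "\<forall>j. j \<notin> J \<longrightarrow> \<bar>residual_corr T y ?z j\<bar> \<le> r"
    using kkt(1) by (auto simp: J_def P_def pattern_sign_def)
  thus ?thesis unfolding lasso_piece_def J_def P_def by blast
qed

subsection \<open>Monotonicity on the whole interval\<close>

text \<open>Take the piece containing \<open>a\<close> and its last point \<open>q\<close> in \<open>[a, b]\<close>; the rest of the cover,
  being closed, covers \<open>[q, b]\<close>, so induction on the size of the cover applies.\<close>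
lemma antitone_on_closed_cover:
  fixes g :: "real \<Rightarrow> real"
  assumes "finite F" "\<forall>C\<in>F. closed C" "\<forall>C\<in>F. antimono_on (C \<inter> {a..b}) g"
    "{a..b} \<subseteq> \<Union>F" "a \<le> b"
  shows "g b \<le> g a"
  using assms
proof (induction "card F" arbitrary: F a rule: less_induct)
  case less
  obtain C where C: "C \<in> F" "a \<in> C" using less.prems(4,5) by auto
  have mono_C: "antimono_on (C \<inter> {a..b}) g" using less.prems(3) C by blast
  show ?case
  proof (cases "b \<in> C")
    case True thus ?thesis using monotone_onD[OF mono_C] C less.prems(5) by simp
  next
    case False
    define D where "D = C \<inter> {a..b}"
    have "closed D" using less.prems(2) C by (simp add: D_def closed_Int)
    moreover have "D \<noteq> {}" using C less.prems(5) by (auto simp: D_def)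
    moreover have D_bdd: "bdd_above D" by (auto simp: D_def bdd_above_def)
    ultimately have qD: "Sup D \<in> D" by (simp add: closed_contains_Sup)
    define q where "q = Sup D"
    have qb: "a \<le> q" "q < b" using qD False by (auto simp: q_def D_def le_less)
    have gq: "g q \<le> g a" using monotone_onD[OF mono_C] qD C less.prems(5) by (auto simp: q_def D_def)
    have "{q<..b} \<subseteq> \<Union>(F - {C})"
    proof
      fix r assume r: "r \<in> {q<..b}"
      hence "r \<in> {a..b}" using qb by auto
      moreover have "r \<notin> D" using cSup_upper[OF _ D_bdd, of r] r by (auto simp: q_def)
      ultimately show "r \<in> \<Union>(F - {C})" using less.prems(4) by (auto simp: D_def)
    qed
    moreover have "closed (\<Union>(F - {C}))" using less.prems(1,2) by (intro closed_Union) auto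
    ultimately have "closure {q<..b} \<subseteq> \<Union>(F - {C})" by (rule closure_minimal)
    hence "{q..b} \<subseteq> \<Union>(F - {C})" using qb by simp
    moreover have "\<forall>C'\<in>F - {C}. antimono_on (C' \<inter> {q..b}) g"
    proof
      fix C' assume "C' \<in> F - {C}"
      hence "antimono_on (C' \<inter> {a..b}) g" using less.prems(3) by blast
      moreover have "C' \<inter> {q..b} \<subseteq> C' \<inter> {a..b}" using qb by auto
      ultimately show "antimono_on (C' \<inter> {q..b}) g" by (rule monotone_on_subset)
    qed
    moreover have "card (F - {C}) < card F" by (rule card_Diff1_less[OF less.prems(1) C(1)])
    ultimately have "g b \<le> g q" using less.hyps[of "F - {C}" q] less.prems(1,2) qb by auto
    thus ?thesis using gq by simp
  qed
qed

theorem mainTheorem18: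
  fixes T :: "real^'n^'m" and y :: "real^'m" and lam mu :: real and i :: 'n
  assumes "inj ((*v) T)"
    and "positive_cone_condition T"
    and "lam > 0"
    and "i \<in> lasso_support T y lam"
    and "0 < mu" and "mu \<le> lam"
  shows "\<bar>lasso_sol T y mu $ i\<bar> \<le> \<bar>lasso_sol T y lam $ i\<bar>"
proof -
  note inj = assms(1) and cone = assms(2)
  define pieces where "pieces = (\<lambda>(J, P). lasso_piece T y J P) ` (UNIV :: ('n set \<times> 'n set) set)"
  have pos: "0 < 1/lam" using assms(3) by simp
  have "\<bar>lasso_sol T y (1 / (1/mu)) $ i\<bar> \<le> \<bar>lasso_sol T y (1 / (1/lam)) $ i\<bar>"
  proof (rule antitone_on_closed_cover[where F = pieces and g = "\<lambda>r. \<bar>lasso_sol T y (1/r) $ i\<bar>"])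
    show "finite pieces" "\<forall>C\<in>pieces. closed C"
      by (auto simp: pieces_def closed_lasso_piece)
    have "antimono_on (lasso_piece T y J P \<inter> {1/lam..1/mu}) (\<lambda>r. \<bar>lasso_sol T y (1/r) $ i\<bar>)" for J P
      by (rule monotone_on_subset[OF abs_lasso_sol_antitone_on_piece[OF inj cone pos]]) auto
    thus "\<forall>C\<in>pieces. antimono_on (C \<inter> {1/lam..1/mu}) (\<lambda>r. \<bar>lasso_sol T y (1/r) $ i\<bar>)"
      by (auto simp: pieces_def)
    show "{1/lam..1/mu} \<subseteq> \<Union>pieces"
    proof
      fix r assume "r \<in> {1/lam..1/mu}"
      hence "r > 0" using pos by (meson atLeastAtMost_iff less_le_trans)
      thus "r \<in> \<Union>pieces" using lasso_piece_of_sol[OF inj, of r y] unfolding pieces_def by blast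
    qed
    show "1/lam \<le> 1/mu" using assms by (simp add: frac_le)
  qed
  thus ?thesis by simp
qed

end
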